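(* (a) Let $T$ be a numerical semigroup with $\alpha$-rectangular Apéry set, and let $d_1,d_2$ be coprime positive integers with $d_1\in T$ not a minimal generator of $T$, $d_2\ge 2$, $d_1\notin\mathrm{Ap}(T)$ and $d_1>d_2\,m(T)$. Then the numerical semigroup $S=d_2T+d_1\mathbb N=\{d_2t+d_1k: t\in T,k\in\mathbb N\}$ has $\alpha$-rectangular Apéry set. (b) Conversely, every numerical semigroup $S\neq\mathbb N$ with $\alpha$-rectangular Apéry set is of the form $S=d_2T+d_1\mathbb N$ for some numerical semigroup $T$ with $\alpha$-rectangular Apéry set and integers $d_1,d_2$ satisfying all the hypotheses in (a).
   Context: A numerical semigroup is a submonoid $S$ of $(\mathbb N,+)$ with finite complement in $\mathbb N$; $g_1<\dots<g_\nu$ is its minimal system of generators, $m(S)=g_1$ its multiplicity, and $\mathrm{Ap}(S)=\{s\in S: s-m(S)\notin S\}$. For $i=2,\dots,\nu$, $\alpha_i=\max\{h\in\mathbb N: hg_i\in\mathrm{Ap}(S)\}$, and $\mathrm{Ap}(S)$ is $\alpha$-rectangular if $\mathrm{Ap}(S)=\{\sum_{i=2}^\nu\lambda_ig_i: 0\le\lambda_i\le\alpha_i\}$. (Under the hypotheses of (a), $S=d_2T+d_1\mathbb N$ is the gluing of $T$ and $\mathbb N$, minimally generated by $d_2$ times the minimal generators of $T$ together with $d_1$.) *)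

theory Defs
  imports Main
begin

definition numerical_semigroup :: "nat set \<Rightarrow> bool" where
  "numerical_semigroup S \<longleftrightarrow> 0 \<in> S \<and> (\<forall>a\<in>S. \<forall>b\<in>S. a + b \<in> S) \<and> finite (UNIV - S)"

definition min_gens :: "nat set \<Rightarrow> nat set" where
  "min_gens S = {s \<in> S. s \<noteq> 0 \<and> \<not> (\<exists>a\<in>S. \<exists>b\<in>S. a \<noteq> 0 \<and> b \<noteq> 0 \<and> s = a + b)}"

definition multiplicity_ns :: "nat set \<Rightarrow> nat" where
  "multiplicity_ns S = (LEAST x. x \<in> S \<and> x \<noteq> 0)"

text \<open>Apery set with respect to the multiplicity: s in S with s - m(S) not in S
  (as an integer, i.e. either s < m(S) or s - m(S) is not in S).\<close>
definition apery :: "nat set \<Rightarrow> nat set" where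
  "apery S = {s \<in> S. \<not> (multiplicity_ns S \<le> s \<and> s - multiplicity_ns S \<in> S)}"

definition alpha_ns :: "nat set \<Rightarrow> nat \<Rightarrow> nat" where
  "alpha_ns S g = (GREATEST h. h * g \<in> apery S)"

definition other_gens :: "nat set \<Rightarrow> nat set" where
  "other_gens S = min_gens S - {multiplicity_ns S}"

definition alpha_rectangular :: "nat set \<Rightarrow> bool" where
  "alpha_rectangular S \<longleftrightarrow>
     apery S = {(\<Sum>g\<in>other_gens S. lam g * g) | lam. \<forall>g\<in>other_gens S. lam g \<le> alpha_ns S g}"

definition gluing_N :: "nat \<Rightarrow> nat set \<Rightarrow> nat \<Rightarrow> nat set" where
  "gluing_N d2 T d1 = {d2 * t + d1 * k | t k. t \<in> T}"

end

theory Submission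
  imports Defs "HOL-Number_Theory.Cong"
begin

text \<open>(a) As \<open>d1\<close> and \<open>d2\<close> are coprime, an element \<open>d2 t + d1 k\<close> of \<open>S = d2 T + d1 \<nat>\<close>
  determines \<open>k\<close> modulo \<open>d2\<close>. Hence \<open>Ap(S) = {d2 w + d1 k | w \<in> Ap(T), k < d2}\<close>, the minimal
  generators of \<open>S\<close> besides its multiplicity \<open>d2 m(T)\<close> are \<open>d1\<close> and \<open>d2\<close> times those of
  \<open>T\<close>, with \<open>\<alpha>(d1) = d2 - 1\<close> and \<open>\<alpha>(d2 u) = \<alpha>(u)\<close>; so \<open>Ap(S)\<close> is \<open>\<alpha>\<close>-rectangular exactly when \<open>Ap(T)\<close> is.

  (b) In an \<open>\<alpha>\<close>-rectangular \<open>S\<close>, each \<open>(\<alpha>(h) + 1) h\<close> leaves \<open>Ap(S)\<close>, so it is a box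
  combination of the generators not involving \<open>h\<close> plus a positive multiple of \<open>m\<close>. Summing these
  relations shows that some generator \<open>g\<close> occurs in none of the others'. Modulo \<open>m\<close>, the other
  generators then span a subgroup \<open>H\<close> containing \<open>j g\<close> exactly when \<open>d = \<alpha>(g) + 1\<close> divides
  \<open>j\<close>; since \<open>H\<close> and \<open>g\<close> generate \<open>\<int>/m\<close>, \<open>H = d\<int>/m\<close>. So \<open>d\<close> divides \<open>m\<close> and all other
  generators, \<open>S = d T + g \<nat>\<close> with \<open>T = {t. d t \<in> S}\<close>, and (a) transfers rectangularity to
  \<open>T\<close>.\<close>

definition gen_sum :: "nat set \<Rightarrow> (nat \<Rightarrow> nat) \<Rightarrow> nat" where
  "gen_sum S lam = (\<Sum>g\<in>other_gens S. lam g * g)"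

definition alpha_box :: "nat set \<Rightarrow> (nat \<Rightarrow> nat) set" where
  "alpha_box S = {lam. \<forall>g\<in>other_gens S. lam g \<le> alpha_ns S g}"

definition quotient_ns :: "nat set \<Rightarrow> nat \<Rightarrow> nat set" where
  "quotient_ns S d = {t. d * t \<in> S}"

lemma alpha_rectangular_iff: "alpha_rectangular S \<longleftrightarrow> apery S = gen_sum S ` alpha_box S"
proof -
  have "{(\<Sum>g\<in>other_gens S. lam g * g) | lam. \<forall>g\<in>other_gens S. lam g \<le> alpha_ns S g}
      = gen_sum S ` alpha_box S"
    by (auto simp: gen_sum_def alpha_box_def)
  then show ?thesis by (simp add: alpha_rectangular_def)
qed

lemma gen_sum_add: "gen_sum S (\<lambda>g. a g + b g) = gen_sum S a + gen_sum S b"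
  unfolding gen_sum_def by (simp add: distrib_right sum.distrib)

lemma add_not_mem_min_gens: "a \<in> S \<Longrightarrow> b \<in> S \<Longrightarrow> a \<noteq> 0 \<Longrightarrow> b \<noteq> 0 \<Longrightarrow> a + b \<notin> min_gens S"
  by (auto simp: min_gens_def)

lemma coprime_lincomb_eq:
  fixes d1 d2 a b k k' :: nat
  assumes cop: "coprime d1 d2" and eq: "d2 * a + d1 * k = d2 * b + d1 * k'" and k: "k < d2"
  shows "\<exists>j. k' = k + d2 * j \<and> a = b + d1 * j"
proof (cases "k \<le> k'")
  case True
  then obtain r where r: "k' = k + r" using nat_le_iff_add by blast
  then have e: "d2 * a = d2 * b + d1 * r" using eq by (simp add: algebra_simps)
  then have "d2 dvd d1 * r" by (metis dvd_add_right_iff dvd_triv_left)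
  then have "d2 dvd r" using cop coprime_dvd_mult_right_iff coprime_commute by blast
  then obtain j where j: "r = d2 * j" by (auto simp: dvd_def)
  have "d2 * a = d2 * (b + d1 * j)" using e j by (simp add: algebra_simps)
  then have "a = b + d1 * j" using k by simp
  then show ?thesis using r j by blast
next
  case False
  then obtain r where r: "k = k' + r" "0 < r" by (metis less_imp_add_positive not_le)
  then have "d2 * b = d2 * a + d1 * r" using eq by (simp add: algebra_simps)
  then have "d2 dvd d1 * r" by (metis dvd_add_right_iff dvd_triv_left)
  then have "d2 dvd r" using cop coprime_dvd_mult_right_iff coprime_commute by blast
  moreover have "r < d2" using r k by simp
  ultimately show ?thesis using r(2) by (simp add: nat_dvd_not_less)
qed

section \<open>Numerical semigroups and Apery sets\<close>

locale num_semigroup =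
  fixes S :: "nat set"
  assumes numerical_semigroup: "numerical_semigroup S"
begin

abbreviation m :: nat where "m \<equiv> multiplicity_ns S"

lemma zero_mem: "0 \<in> S"
  using numerical_semigroup by (simp add: numerical_semigroup_def)

lemma add_mem: "a \<in> S \<Longrightarrow> b \<in> S \<Longrightarrow> a + b \<in> S"
  using numerical_semigroup by (simp add: numerical_semigroup_def)

lemma mult_mem: "a \<in> S \<Longrightarrow> k * a \<in> S"
  by (induction k) (auto simp: zero_mem add_mem)

lemma sum_mem: "(\<And>x. x \<in> A \<Longrightarrow> f x \<in> S) \<Longrightarrow> sum f A \<in> S"
  by (induction A rule: infinite_finite_induct) (auto simp: zero_mem add_mem)

lemma eventually_mem: "\<exists>N. \<forall>n\<ge>N. n \<in> S"
proof -
  have "finite (UNIV - S)" using numerical_semigroup by (simp add: numerical_semigroup_def)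
  then obtain N where "\<forall>n\<in>UNIV - S. n < N" using finite_nat_set_iff_bounded by blast
  then show ?thesis using not_le by blast
qed

lemma multiplicity_mem: "m \<in> S" and multiplicity_pos: "0 < m"
proof -
  obtain N where "\<forall>n\<ge>N. n \<in> S" using eventually_mem by blast
  then have "\<exists>x. x \<in> S \<and> x \<noteq> 0" by (intro exI[of _ "Suc N"]) simp
  from LeastI_ex[OF this] show "m \<in> S" "0 < m" unfolding multiplicity_ns_def by auto
qed

lemma multiplicity_le: "x \<in> S \<Longrightarrow> x \<noteq> 0 \<Longrightarrow> m \<le> x"
  unfolding multiplicity_ns_def by (rule Least_le) simp

lemma apery_iff: "x \<in> apery S \<longleftrightarrow> x \<in> S \<and> \<not> (m \<le> x \<and> x - m \<in> S)"
  by (simp add: apery_def)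

lemma zero_mem_apery: "0 \<in> apery S"
  using zero_mem multiplicity_pos by (simp add: apery_iff)

lemma finite_apery: "finite (apery S)"
proof -
  obtain N where N: "\<forall>n\<ge>N. n \<in> S" using eventually_mem by blast
  have "x < m + N" if "x \<in> apery S" for x
  proof (rule ccontr)
    assume "\<not> x < m + N"
    then have "m \<le> x" "x - m \<in> S" using N by auto
    then show False using that by (simp add: apery_iff)
  qed
  then have "apery S \<subseteq> {..<m + N}" by blast
  then show ?thesis using finite_subset by blast
qed

lemma apery_decomp: "s \<in> S \<Longrightarrow> \<exists>a k. a \<in> apery S \<and> s = a + k * m"
proof (induction s rule: less_induct)
  case (less s)
  show ?case
  proof (cases "s \<in> apery S")
    case True
    then show ?thesis by (intro exI[of _ s] exI[of _ 0]) simp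
  next
    case False
    then have "m \<le> s" "s - m \<in> S" using less.prems by (auto simp: apery_iff)
    moreover have "s - m < s" using multiplicity_pos \<open>m \<le> s\<close> by linarith
    ultimately obtain a k where "a \<in> apery S" "s - m = a + k * m" using less.IH by blast
    then show ?thesis using \<open>m \<le> s\<close> by (intro exI[of _ a] exI[of _ "Suc k"]) auto
  qed
qed

lemma apery_eq_if_cong:
  assumes "a \<in> apery S" "b \<in> apery S" "[a = b] (mod m)"
  shows "a = b"
proof -
  have ordered: "a = b" if ab: "a \<in> apery S" "b \<in> apery S" "[a = b] (mod m)" "a \<le> b" for a b
  proof (rule ccontr)
    assume "a \<noteq> b"
    obtain q where q: "b - a = m * q"
      using ab(3,4) mod_eq_dvd_iff_nat[of a b m] by (auto simp: cong_def dvd_def)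
    with \<open>a \<noteq> b\<close> ab(4) obtain q' where "q = Suc q'" by (cases q) auto
    with q ab(4) have "b - m = a + q' * m" "m \<le> b" by (simp_all add: algebra_simps)
    moreover have "a + q' * m \<in> S"
      using ab(1) add_mem mult_mem[OF multiplicity_mem] by (simp add: apery_iff)
    ultimately show False using ab(2) by (simp add: apery_iff)
  qed
  show ?thesis
  proof (cases "a \<le> b")
    case True
    then show ?thesis using ordered[OF assms] by simp
  next
    case False
    then show ?thesis using ordered[OF assms(2,1) cong_sym[OF assms(3)]] by simp
  qed
qed

lemma apery_add_left: "x + y \<in> apery S \<Longrightarrow> x \<in> S \<Longrightarrow> y \<in> S \<Longrightarrow> x \<in> apery S"
proof -
  assume xy: "x + y \<in> apery S" "x \<in> S" "y \<in> S"
  show "x \<in> apery S"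
  proof (rule ccontr)
    assume "x \<notin> apery S"
    then have "m \<le> x" "x - m \<in> S" using xy(2) by (auto simp: apery_iff)
    then have "(x - m) + y \<in> S" using add_mem xy(3) by blast
    moreover have "(x - m) + y = x + y - m" using \<open>m \<le> x\<close> by simp
    ultimately have "x + y - m \<in> S" by simp
    then show False using xy(1) \<open>m \<le> x\<close> unfolding apery_iff by auto
  qed
qed

lemma mult_mem_apery_iff:
  assumes "g \<in> S" "0 < g"
  shows "j * g \<in> apery S \<longleftrightarrow> j \<le> alpha_ns S g"
proof -
  obtain K where K: "\<forall>x\<in>apery S. x < K" using finite_apery finite_nat_set_iff_bounded by blast
  have bound: "i \<le> K" if "i * g \<in> apery S" for i
  proof -
    have "i \<le> i * g" using assms(2) by simp
    then show ?thesis using K that by (meson less_imp_le_nat order_trans)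
  qed
  have alpha: "alpha_ns S g * g \<in> apery S"
    unfolding alpha_ns_def
    by (rule GreatestI_nat[where k = 0]) (use zero_mem_apery bound in auto)
  have "i \<le> alpha_ns S g" if "i * g \<in> apery S" for i
    unfolding alpha_ns_def by (rule Greatest_le_nat) (use that bound in auto)
  moreover have "j * g \<in> apery S" if "j \<le> alpha_ns S g"
  proof -
    have "j * g + (alpha_ns S g - j) * g = alpha_ns S g * g"
      using that by (simp add: add_mult_distrib[symmetric])
    then show ?thesis using apery_add_left alpha mult_mem[OF assms(1)] by metis
  qed
  ultimately show ?thesis by blast
qed

lemma min_gens_mem_apery:
  assumes "x \<in> min_gens S" "x \<noteq> m"
  shows "x \<in> apery S"
proof (rule ccontr)
  assume "x \<notin> apery S"
  moreover have "x \<in> S" "x \<noteq> 0" using assms(1) by (auto simp: min_gens_def)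
  ultimately have "x = m + (x - m)" "x - m \<in> S" "x - m \<noteq> 0"
    using assms(2) by (auto simp: apery_iff)
  then show False
    using assms(1) add_not_mem_min_gens multiplicity_mem multiplicity_pos by (metis neq0_conv)
qed

lemma other_gensD:
  assumes "h \<in> other_gens S"
  shows "h \<in> S" "m < h" "h \<in> apery S"
proof -
  have h: "h \<in> min_gens S" "h \<noteq> m" using assms by (auto simp: other_gens_def)
  then show "h \<in> S" "h \<in> apery S" using min_gens_mem_apery by (auto simp: min_gens_def)
  then show "m < h" using h multiplicity_le by (fastforce simp: min_gens_def)
qed

lemma finite_other_gens: "finite (other_gens S)"
  using other_gensD(3) finite_apery by (meson finite_subset subsetI)

lemma gen_sum_mem: "gen_sum S lam \<in> S"
  unfolding gen_sum_def by (rule sum_mem) (simp add: mult_mem other_gensD(1))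

lemma gen_sum_remove:
  "h \<in> other_gens S \<Longrightarrow> gen_sum S lam = lam h * h + (\<Sum>g\<in>other_gens S - {h}. lam g * g)"
  unfolding gen_sum_def by (rule sum.remove[OF finite_other_gens])

lemma gen_sum_split: "h \<in> other_gens S \<Longrightarrow> gen_sum S lam = lam h * h + gen_sum S (lam(h := 0))"
proof -
  assume h: "h \<in> other_gens S"
  have "(\<Sum>g\<in>other_gens S - {h}. (lam(h := 0)) g * g) = (\<Sum>g\<in>other_gens S - {h}. lam g * g)"
    by (rule sum.cong) auto
  then show ?thesis using gen_sum_remove[OF h, of lam] gen_sum_remove[OF h, of "lam(h := 0)"] by simp
qed

lemma sum_succ_alpha_mult_eq:
  assumes "\<And>h. h \<in> other_gens S \<Longrightarrow> (alpha_ns S h + 1) * h = gen_sum S (mu h) + c h * m"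
  shows "gen_sum S (alpha_ns S) + (\<Sum>g\<in>other_gens S. g)
    = (\<Sum>g\<in>other_gens S. (\<Sum>h\<in>other_gens S. mu h g) * g) + (\<Sum>h\<in>other_gens S. c h) * m"
proof -
  let ?G = "other_gens S"
  have "gen_sum S (alpha_ns S) + (\<Sum>g\<in>?G. g) = (\<Sum>h\<in>?G. (alpha_ns S h + 1) * h)"
    by (simp add: gen_sum_def sum.distrib)
  also have "\<dots> = (\<Sum>h\<in>?G. gen_sum S (mu h) + c h * m)"
    using assms by (intro sum.cong refl)
  also have "\<dots> = (\<Sum>h\<in>?G. \<Sum>g\<in>?G. mu h g * g) + (\<Sum>h\<in>?G. c h) * m"
    by (simp add: gen_sum_def sum.distrib sum_distrib_right)
  also have "(\<Sum>h\<in>?G. \<Sum>g\<in>?G. mu h g * g) = (\<Sum>g\<in>?G. \<Sum>h\<in>?G. mu h g * g)"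
    by (rule sum.swap)
  finally show ?thesis by (simp add: sum_distrib_right)
qed

lemma numerical_semigroup_quotient:
  assumes "0 < d"
  shows "numerical_semigroup (quotient_ns S d)"
proof -
  obtain N where N: "\<forall>n\<ge>N. n \<in> S" using eventually_mem by blast
  have "t \<in> quotient_ns S d" if "N \<le> t" for t
  proof -
    have "t \<le> d * t" using assms by simp
    then have "N \<le> d * t" using that by linarith
    then show ?thesis using N by (simp add: quotient_ns_def)
  qed
  then have "UNIV - quotient_ns S d \<subseteq> {..<N}" by (auto simp: not_less[symmetric])
  then have "finite (UNIV - quotient_ns S d)" using finite_subset by blast
  then show ?thesis
    by (simp add: numerical_semigroup_def quotient_ns_def zero_mem add_mem distrib_left)
qed

lemma multiplicity_quotient:
  assumes "0 < d" "d dvd m"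
  shows "multiplicity_ns (quotient_ns S d) = m div d"
  unfolding multiplicity_ns_def[of "quotient_ns S d"]
proof (rule Least_equality)
  show "m div d \<in> quotient_ns S d \<and> m div d \<noteq> 0"
    using assms multiplicity_mem multiplicity_pos by (auto simp: quotient_ns_def elim: dvdE)
next
  fix t assume "t \<in> quotient_ns S d \<and> t \<noteq> 0"
  then have "m \<le> d * t" using assms(1) multiplicity_le by (simp add: quotient_ns_def)
  then show "m div d \<le> t" using div_le_mono[of m "d * t" d] assms(1) by simp
qed

end

section \<open>Gluing with the natural numbers\<close>

locale gluing = T: num_semigroup T for T +
  fixes d1 d2 :: nat
  assumes coprime: "coprime d1 d2" and d1_mem: "d1 \<in> T" and two_le_d2: "2 \<le> d2"
    and d1_not_apery: "d1 \<notin> apery T" and d1_gt: "d2 * multiplicity_ns T < d1"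
begin

abbreviation S :: "nat set" where "S \<equiv> gluing_N d2 T d1"

lemma d1_pos: "0 < d1" and d2_pos: "0 < d2"
  using d1_gt two_le_d2 by auto

lemma d1_not_min_gens: "d1 \<notin> min_gens T"
proof -
  have "multiplicity_ns T \<le> d2 * multiplicity_ns T" using d2_pos by simp
  then have "multiplicity_ns T < d1" using d1_gt by linarith
  then show ?thesis using T.min_gens_mem_apery d1_not_apery by blast
qed

lemma d2_not_dvd_d1: "\<not> d2 dvd d1"
proof
  assume "d2 dvd d1"
  then have "d2 = 1" using coprime_common_divisor_nat[OF coprime _ dvd_refl] by simp
  then show False using two_le_d2 by simp
qed

lemma mem_gluing_iff: "x \<in> S \<longleftrightarrow> (\<exists>t k. t \<in> T \<and> x = d2 * t + d1 * k)"
  unfolding gluing_N_def by blast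

lemma gluing_mem: "t \<in> T \<Longrightarrow> d2 * t + d1 * k \<in> S"
  unfolding mem_gluing_iff by blast

lemma d1_mem_gluing: "d1 \<in> S"
  using gluing_mem[OF T.zero_mem, of 1] by simp

lemma mult_d2_mem_gluing: "t \<in> T \<Longrightarrow> d2 * t \<in> S"
  using gluing_mem[of t 0] by simp

lemma eventually_mem_gluing: "\<exists>M. \<forall>n\<ge>M. n \<in> S"
proof -
  obtain N where N: "\<forall>n\<ge>N. n \<in> T" using T.eventually_mem by blast
  obtain x where x: "[d1 * x = 1] (mod d2)" using cong_solve_coprime_nat[OF coprime] by auto
  have "n \<in> S" if n: "d1 * d2 + d2 * N \<le> n" for n
  proof -
    \<comment> \<open>choose the \<open>d1\<close>-coefficient \<open>k < d2\<close> with \<open>d1 * k \<equiv> n (mod d2)\<close>\<close>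
    define k where "k = (x * n) mod d2"
    have "[d1 * k = d1 * x * n] (mod d2)"
      unfolding k_def by (simp add: cong_def mod_mult_right_eq mult.assoc)
    also have "[d1 * x * n = 1 * n] (mod d2)" using x by (rule cong_mult) simp
    finally have cong: "[d1 * k = n] (mod d2)" by simp
    have "d1 * k \<le> d1 * d2" using d2_pos by (simp add: k_def less_imp_le)
    then have le: "d1 * k \<le> n" using n by linarith
    then have "d2 dvd n - d1 * k" using cong mod_eq_dvd_iff_nat[OF le, of d2] by (simp add: cong_def)
    then obtain t where t: "n - d1 * k = d2 * t" by (auto simp: dvd_def)
    moreover have "d2 * N \<le> n - d1 * k" using n \<open>d1 * k \<le> d1 * d2\<close> by linarith
    ultimately have "N \<le> t" using d2_pos by simp
    then have "t \<in> T" using N by blast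
    moreover have "n = d2 * t + d1 * k" using t le by linarith
    ultimately show ?thesis using gluing_mem by blast
  qed
  then show ?thesis by blast
qed

lemma numerical_semigroup_gluing: "numerical_semigroup S"
proof -
  have "a + b \<in> S" if ab: "a \<in> S" "b \<in> S" for a b
  proof -
    obtain ta ka tb kb where "ta \<in> T" "tb \<in> T" "a = d2 * ta + d1 * ka" "b = d2 * tb + d1 * kb"
      using ab by (auto simp: mem_gluing_iff)
    then show ?thesis
      using gluing_mem[of "ta + tb" "ka + kb"] T.add_mem by (simp add: algebra_simps)
  qed
  moreover obtain M where "\<forall>n\<ge>M. n \<in> S" using eventually_mem_gluing by blast
  then have "UNIV - S \<subseteq> {..<M}" by (auto simp: not_less[symmetric])
  then have "finite (UNIV - S)" using finite_subset by blast
  ultimately show ?thesis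
    using gluing_mem[OF T.zero_mem, of 0] by (simp add: numerical_semigroup_def)
qed

sublocale S: num_semigroup S
  by (rule num_semigroup.intro, rule numerical_semigroup_gluing)

lemma multiplicity_gluing: "multiplicity_ns S = d2 * multiplicity_ns T"
  unfolding multiplicity_ns_def[of S]
proof (rule Least_equality)
  show "d2 * multiplicity_ns T \<in> S \<and> d2 * multiplicity_ns T \<noteq> 0"
    using mult_d2_mem_gluing T.multiplicity_mem T.multiplicity_pos d2_pos by simp
next
  fix y assume y: "y \<in> S \<and> y \<noteq> 0"
  then obtain t k where tk: "t \<in> T" "y = d2 * t + d1 * k" by (auto simp: mem_gluing_iff)
  show "d2 * multiplicity_ns T \<le> y"
  proof (cases "k = 0")
    case True
    then show ?thesis using y tk T.multiplicity_le by auto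
  next
    case False
    then have "d1 \<le> d1 * k" by simp
    then have "d1 \<le> y" using tk(2) by linarith
    then show ?thesis using d1_gt by linarith
  qed
qed

definition glue_set :: "nat set \<Rightarrow> nat set" where
  "glue_set A = {d2 * w + d1 * k | w k. w \<in> A \<and> k < d2}"

lemma mult_d2_mem_glue_set: "d2 * w \<in> glue_set A \<longleftrightarrow> w \<in> A"
proof
  assume "d2 * w \<in> glue_set A"
  then obtain w' k where "w' \<in> A" "k < d2" "d2 * w' + d1 * k = d2 * w + d1 * 0"
    by (auto simp: glue_set_def)
  with coprime_lincomb_eq[OF coprime this(3,2)] show "w \<in> A" by auto
next
  assume "w \<in> A"
  moreover have "d2 * w = d2 * w + d1 * 0" by simp
  ultimately show "d2 * w \<in> glue_set A" unfolding glue_set_def using d2_pos by blast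
qed

lemma glue_set_eq_iff: "glue_set A = glue_set B \<longleftrightarrow> A = B"
proof
  assume "glue_set A = glue_set B"
  then have "w \<in> A \<longleftrightarrow> w \<in> B" for w by (metis mult_d2_mem_glue_set)
  then show "A = B" by blast
qed simp

lemma mem_gluing_reduced:
  assumes "x \<in> S"
  shows "\<exists>t k. t \<in> T \<and> k < d2 \<and> x = d2 * t + d1 * k"
proof -
  obtain t k where tk: "t \<in> T" "x = d2 * t + d1 * k" using assms by (auto simp: mem_gluing_iff)
  define q r where "q = k div d2" and "r = k mod d2"
  have "k = q * d2 + r" "r < d2" using d2_pos by (auto simp: q_def r_def)
  then have "x = d2 * (t + q * d1) + d1 * r" "r < d2" using tk(2) by (simp_all add: algebra_simps)
  moreover have "t + q * d1 \<in> T" using T.add_mem T.mult_mem d1_mem tk(1) by blast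
  ultimately show ?thesis by blast
qed

lemma apery_gluing_subset: "apery S \<subseteq> glue_set (apery T)"
proof
  fix x assume x: "x \<in> apery S"
  then have "x \<in> S" by (simp add: S.apery_iff)
  then obtain t k where tk: "t \<in> T" "k < d2" "x = d2 * t + d1 * k"
    using mem_gluing_reduced by blast
  have "t \<in> apery T"
  proof (rule ccontr)
    assume "t \<notin> apery T"
    then have "multiplicity_ns T \<le> t" "t - multiplicity_ns T \<in> T"
      using tk(1) by (auto simp: T.apery_iff)
    then have "x - d2 * multiplicity_ns T = d2 * (t - multiplicity_ns T) + d1 * k"
      using tk(3) by (simp add: diff_mult_distrib2)
    moreover have "d2 * multiplicity_ns T \<le> x"
      using tk(3) \<open>multiplicity_ns T \<le> t\<close> by (metis mult_le_mono2 trans_le_add1)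
    ultimately show False
      using x gluing_mem[OF \<open>t - multiplicity_ns T \<in> T\<close>, of k]
      by (simp add: S.apery_iff multiplicity_gluing)
  qed
  then show "x \<in> glue_set (apery T)" using tk unfolding glue_set_def by blast
qed

lemma glue_set_apery_subset: "glue_set (apery T) \<subseteq> apery S"
proof
  fix x assume "x \<in> glue_set (apery T)"
  then obtain w k where wk: "w \<in> apery T" "k < d2" "x = d2 * w + d1 * k"
    unfolding glue_set_def by blast
  show "x \<in> apery S"
  proof (rule ccontr)
    assume "x \<notin> apery S"
    moreover have "x \<in> S" using wk gluing_mem by (simp add: T.apery_iff)
    ultimately obtain t k' where tk: "t \<in> T" "multiplicity_ns S \<le> x"
      "x - multiplicity_ns S = d2 * t + d1 * k'"
      by (auto simp: S.apery_iff mem_gluing_iff)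
    then have "d2 * w + d1 * k = d2 * (t + multiplicity_ns T) + d1 * k'"
      using wk(3) by (simp add: multiplicity_gluing algebra_simps)
    then obtain j where "w = t + multiplicity_ns T + d1 * j"
      using coprime_lincomb_eq[OF coprime _ wk(2)] by blast
    then have "w = (t + d1 * j) + multiplicity_ns T" by simp
    moreover have "t + d1 * j \<in> T"
      using T.add_mem[OF tk(1) T.mult_mem[OF d1_mem, of j]] by (simp add: mult.commute)
    ultimately show False using wk(1) by (simp add: T.apery_iff)
  qed
qed

lemma apery_gluing: "apery S = glue_set (apery T)"
  using apery_gluing_subset glue_set_apery_subset by (rule subset_antisym)

lemma mult_d1_mem_apery_gluing_iff: "j * d1 \<in> apery S \<longleftrightarrow> j < d2"
proof
  assume "j * d1 \<in> apery S"
  then obtain w k where wk: "w \<in> apery T" "k < d2" "d2 * w + d1 * k = d2 * 0 + d1 * j"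
    by (auto simp: apery_gluing glue_set_def mult.commute)
  from coprime_lincomb_eq[OF coprime wk(3,2)] obtain i where i: "j = k + d2 * i" "w = d1 * i"
    by auto
  \<comment> \<open>\<open>d1 \<notin> Ap(T)\<close> excludes every positive multiple of \<open>d1\<close> from \<open>Ap(T)\<close>\<close>
  have "i = 0"
  proof (rule ccontr)
    assume "i \<noteq> 0"
    then obtain i' where "i = Suc i'" using not0_implies_Suc by blast
    then have "d1 + i' * d1 \<in> apery T" using wk(1) i(2) by (simp add: mult.commute)
    then show False
      using T.apery_add_left[OF _ d1_mem T.mult_mem[OF d1_mem]] d1_not_apery by blast
  qed
  then show "j < d2" using i wk(2) by simp
next
  assume "j < d2"
  then have "d2 * 0 + d1 * j \<in> glue_set (apery T)"
    unfolding glue_set_def using T.zero_mem_apery by blast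
  then show "j * d1 \<in> apery S" by (simp add: apery_gluing mult.commute)
qed

lemma alpha_gluing_d1: "alpha_ns S d1 = d2 - 1"
proof -
  have iff: "j \<le> alpha_ns S d1 \<longleftrightarrow> j < d2" for j
    using S.mult_mem_apery_iff[OF d1_mem_gluing d1_pos, of j] mult_d1_mem_apery_gluing_iff[of j]
    by blast
  from iff[of "alpha_ns S d1"] iff[of "d2 - 1"] d2_pos show ?thesis by linarith
qed

lemma alpha_gluing_mult_d2: "alpha_ns S (d2 * u) = alpha_ns T u"
proof -
  have "j * (d2 * u) \<in> apery S \<longleftrightarrow> j * u \<in> apery T" for j
    using mult_d2_mem_glue_set[of "j * u" "apery T"] by (simp add: apery_gluing mult.left_commute)
  then show ?thesis by (simp add: alpha_ns_def)
qed

lemma mult_d2_mem_gluing_iff: "d2 * u \<in> S \<longleftrightarrow> u \<in> T"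
proof
  assume "d2 * u \<in> S"
  then obtain t k where t: "t \<in> T" and "d2 * u + d1 * 0 = d2 * t + d1 * k"
    by (auto simp: mem_gluing_iff)
  then obtain j where "u = t + d1 * j" using coprime_lincomb_eq[OF coprime _ d2_pos] by blast
  then show "u \<in> T" using T.add_mem[OF t T.mult_mem[OF d1_mem, of j]] by (simp add: mult.commute)
qed (rule mult_d2_mem_gluing)

lemma mem_gluing_less_d1:
  assumes "x \<in> S" "x < d1"
  shows "d2 dvd x"
proof -
  obtain t k where tk: "t \<in> T" "x = d2 * t + d1 * k" using assms(1) by (auto simp: mem_gluing_iff)
  have "k = 0"
  proof (rule ccontr)
    assume "k \<noteq> 0"
    then have "d1 \<le> d1 * k" by simp
    then show False using tk(2) assms(2) by linarith
  qed
  then show ?thesis using tk(2) by simp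
qed

lemma d1_mem_min_gens_gluing: "d1 \<in> min_gens S"
proof -
  have "\<not> (a \<in> S \<and> b \<in> S \<and> a \<noteq> 0 \<and> b \<noteq> 0 \<and> d1 = a + b)" for a b
  proof
    assume ab: "a \<in> S \<and> b \<in> S \<and> a \<noteq> 0 \<and> b \<noteq> 0 \<and> d1 = a + b"
    then have "d2 dvd a" "d2 dvd b" using mem_gluing_less_d1 by auto
    then have "d2 dvd d1" using ab by simp
    then show False using d2_not_dvd_d1 by contradiction
  qed
  then show ?thesis using d1_mem_gluing d1_pos by (auto simp: min_gens_def)
qed

lemma mult_d2_mem_min_gens_gluing:
  assumes u: "u \<in> min_gens T"
  shows "d2 * u \<in> min_gens S"
proof -
  have "\<not> (a \<in> S \<and> b \<in> S \<and> a \<noteq> 0 \<and> b \<noteq> 0 \<and> d2 * u = a + b)" for a b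
  proof
    assume ab: "a \<in> S \<and> b \<in> S \<and> a \<noteq> 0 \<and> b \<noteq> 0 \<and> d2 * u = a + b"
    obtain ta ka where a: "ta \<in> T" "a = d2 * ta + d1 * ka" using ab by (auto simp: mem_gluing_iff)
    obtain tb kb where b: "tb \<in> T" "b = d2 * tb + d1 * kb" using ab by (auto simp: mem_gluing_iff)
    have "d2 * u + d1 * 0 = d2 * (ta + tb) + d1 * (ka + kb)"
      using ab a(2) b(2) by (simp add: algebra_simps)
    from coprime_lincomb_eq[OF coprime this d2_pos]
    obtain j where j: "ka + kb = d2 * j" "u = ta + tb + d1 * j" by auto
    show False
    proof (cases j)
      case 0
      then have "u = ta + tb" "ta \<noteq> 0" "tb \<noteq> 0" using j a(2) b(2) ab by auto
      then show False using add_not_mem_min_gens[OF a(1) b(1)] u by simp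
    next
      case (Suc j')
      define r where "r = ta + tb + d1 * j'"
      have "u = r + d1" using j Suc by (simp add: r_def)
      moreover have "r \<in> T"
        using T.add_mem[OF T.add_mem[OF a(1) b(1)] T.mult_mem[OF d1_mem, of j']]
        by (simp add: r_def mult.commute)
      ultimately show False
        using add_not_mem_min_gens[OF _ d1_mem _ d1_pos[THEN less_imp_neq, symmetric]] u
          d1_not_min_gens by (cases "r = 0") auto
    qed
  qed
  moreover have "d2 * u \<in> S" "d2 * u \<noteq> 0"
    using u mult_d2_mem_gluing d2_pos by (auto simp: min_gens_def)
  ultimately show ?thesis by (auto simp: min_gens_def)
qed

lemma mult_d2_mem_min_gens_gluing_iff: "d2 * u \<in> min_gens S \<longleftrightarrow> u \<in> min_gens T"
proof
  assume u: "d2 * u \<in> min_gens S"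
  have "\<not> (a \<in> T \<and> b \<in> T \<and> a \<noteq> 0 \<and> b \<noteq> 0 \<and> u = a + b)" for a b
  proof
    assume ab: "a \<in> T \<and> b \<in> T \<and> a \<noteq> 0 \<and> b \<noteq> 0 \<and> u = a + b"
    then have "d2 * u = d2 * a + d2 * b" "d2 * a \<noteq> 0" "d2 * b \<noteq> 0" using d2_pos
      by (simp_all add: distrib_left)
    then show False
      using u add_not_mem_min_gens[of "d2 * a" S "d2 * b"] mult_d2_mem_gluing ab by metis
  qed
  moreover have "u \<in> T" "u \<noteq> 0" using u mult_d2_mem_gluing_iff by (auto simp: min_gens_def)
  ultimately show "u \<in> min_gens T" by (auto simp: min_gens_def)
qed (rule mult_d2_mem_min_gens_gluing)

lemma min_gens_gluing: "min_gens S = insert d1 ((*) d2 ` min_gens T)"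
proof (intro equalityI subsetI)
  fix x assume x: "x \<in> min_gens S"
  then obtain t k where tk: "t \<in> T" "x = d2 * t + d1 * k" by (auto simp: min_gens_def mem_gluing_iff)
  show "x \<in> insert d1 ((*) d2 ` min_gens T)"
  proof (cases k)
    case 0
    then show ?thesis using x tk(2) mult_d2_mem_min_gens_gluing_iff by auto
  next
    case (Suc k')
    then have "x = d1 + (d2 * t + d1 * k')" using tk(2) by simp
    then have "x = d1" using x add_not_mem_min_gens[OF d1_mem_gluing gluing_mem[OF tk(1)]] d1_pos
      by (metis add_cancel_left_right neq0_conv)
    then show ?thesis by simp
  qed
qed (use d1_mem_min_gens_gluing mult_d2_mem_min_gens_gluing_iff in auto)

lemma other_gens_gluing: "other_gens S = insert d1 ((*) d2 ` other_gens T)"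
proof -
  have inj: "inj ((*) d2)" using d2_pos by (auto simp: inj_def)
  have "other_gens S = insert d1 ((*) d2 ` min_gens T) - {d2 * multiplicity_ns T}"
    by (simp add: other_gens_def min_gens_gluing multiplicity_gluing)
  also have "\<dots> = insert d1 ((*) d2 ` min_gens T - (*) d2 ` {multiplicity_ns T})"
    using d1_gt by auto
  also have "\<dots> = insert d1 ((*) d2 ` other_gens T)"
    by (simp add: image_set_diff[OF inj] other_gens_def)
  finally show ?thesis .
qed

lemma gen_sum_gluing: "gen_sum S lam = d2 * gen_sum T (\<lambda>u. lam (d2 * u)) + d1 * lam d1"
proof -
  have inj: "inj_on ((*) d2) (other_gens T)" using d2_pos by (auto simp: inj_on_def)
  have "d1 \<notin> (*) d2 ` other_gens T" using d2_not_dvd_d1 by auto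
  then have "gen_sum S lam = lam d1 * d1 + (\<Sum>h\<in>(*) d2 ` other_gens T. lam h * h)"
    using T.finite_other_gens by (simp add: gen_sum_def other_gens_gluing)
  also have "(\<Sum>h\<in>(*) d2 ` other_gens T. lam h * h) = (\<Sum>u\<in>other_gens T. lam (d2 * u) * (d2 * u))"
    by (simp add: sum.reindex[OF inj])
  also have "\<dots> = d2 * gen_sum T (\<lambda>u. lam (d2 * u))"
    by (simp add: gen_sum_def sum_distrib_left mult.left_commute)
  finally show ?thesis by simp
qed

lemma mem_alpha_box_gluing_iff:
  "lam \<in> alpha_box S \<longleftrightarrow> lam d1 < d2 \<and> (\<lambda>u. lam (d2 * u)) \<in> alpha_box T"
  using d2_pos
  by (auto simp: alpha_box_def other_gens_gluing alpha_gluing_d1 alpha_gluing_mult_d2)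

lemma gen_sum_image_gluing: "gen_sum S ` alpha_box S = glue_set (gen_sum T ` alpha_box T)"
proof (intro equalityI subsetI)
  fix x assume "x \<in> gen_sum S ` alpha_box S"
  then obtain lam where "lam \<in> alpha_box S" "x = gen_sum S lam" by blast
  then show "x \<in> glue_set (gen_sum T ` alpha_box T)"
    unfolding glue_set_def mem_alpha_box_gluing_iff gen_sum_gluing by blast
next
  fix x assume "x \<in> glue_set (gen_sum T ` alpha_box T)"
  then obtain lT k where lT: "lT \<in> alpha_box T" "k < d2" "x = d2 * gen_sum T lT + d1 * k"
    unfolding glue_set_def by blast
  define lam where "lam h = (if h = d1 then k else lT (h div d2))" for h
  have "d2 * u \<noteq> d1" for u using d2_not_dvd_d1 by auto
  then have "(\<lambda>u. lam (d2 * u)) = lT" "lam d1 = k" using d2_pos by (auto simp: lam_def)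
  then have "lam \<in> alpha_box S" "x = gen_sum S lam"
    using lT by (simp_all add: mem_alpha_box_gluing_iff gen_sum_gluing)
  then show "x \<in> gen_sum S ` alpha_box S" by blast
qed

theorem alpha_rectangular_gluing_iff: "alpha_rectangular S \<longleftrightarrow> alpha_rectangular T"
  by (simp add: alpha_rectangular_iff apery_gluing gen_sum_image_gluing glue_set_eq_iff)

end

lemma gluing_iff:
  "gluing T d1 d2 \<longleftrightarrow> numerical_semigroup T \<and> coprime d1 d2 \<and> d1 \<in> T \<and> 2 \<le> d2 \<and>
    d1 \<notin> apery T \<and> d2 * multiplicity_ns T < d1"
  by (auto simp: gluing_def gluing_axioms_def num_semigroup_def)

section \<open>Decomposing a semigroup with alpha-rectangular Apery set\<close>

locale alpha_rect = num_semigroup +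
  assumes alpha_rectangular: "alpha_rectangular S" and proper: "S \<noteq> UNIV"
begin

lemma apery_eq: "apery S = gen_sum S ` alpha_box S"
  using alpha_rectangular by (simp add: alpha_rectangular_iff)

lemma gen_sum_mem_apery: "lam \<in> alpha_box S \<Longrightarrow> gen_sum S lam \<in> apery S"
  by (simp add: apery_eq)

lemma mem_decomp:
  assumes "s \<in> S"
  obtains lam k where "lam \<in> alpha_box S" "s = gen_sum S lam + k * m"
proof -
  obtain a k where "a \<in> apery S" "s = a + k * m" using apery_decomp[OF assms] by blast
  then show ?thesis using that by (auto simp: apery_eq)
qed

lemma other_gens_nonempty: "other_gens S \<noteq> {}"
proof
  assume empty: "other_gens S = {}"
  obtain N where N: "\<forall>n\<ge>N. n \<in> S" using eventually_mem by blast
  have "N \<le> N * m" using multiplicity_pos by simp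
  then have "N \<le> 1 + N * m" by linarith
  then have "1 + N * m \<in> S" using N by blast
  then obtain lam k where "1 + N * m = gen_sum S lam + k * m" by (rule mem_decomp)
  then have "m dvd 1 + N * m" using empty by (simp add: gen_sum_def)
  then have "m = 1" using dvd_add_times_triv_right_iff[of m 1 N] by simp
  then have "n \<in> S" for n using mult_mem[OF multiplicity_mem, of n] by simp
  then show False using proper by blast
qed

lemma succ_alpha_mult_decomp:
  assumes h: "h \<in> other_gens S"
  shows "\<exists>mu c. mu \<in> alpha_box S \<and> mu h = 0 \<and> 1 \<le> c \<and>
    (alpha_ns S h + 1) * h = gen_sum S mu + c * m"
proof -
  have hS: "h \<in> S" "0 < h" using other_gensD[OF h] by auto
  define x where "x = (alpha_ns S h + 1) * h"
  have "x \<in> S" unfolding x_def by (rule mult_mem[OF hS(1)])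
  moreover have "x \<notin> apery S"
    unfolding x_def using mult_mem_apery_iff[OF hS, of "alpha_ns S h + 1"] by simp
  ultimately have "m \<le> x" "x - m \<in> S" by (auto simp: apery_iff)
  then obtain mu k where mu: "mu \<in> alpha_box S" "x - m = gen_sum S mu + k * m"
    by (blast elim: mem_decomp)
  then have x: "x = gen_sum S mu + (k + 1) * m" using \<open>m \<le> x\<close> by simp
  have "mu h = 0"
  proof (rule ccontr)
    assume "mu h \<noteq> 0"
    define j where "j = alpha_ns S h + 1 - mu h"
    have "mu h \<le> alpha_ns S h" using mu(1) h by (simp add: alpha_box_def)
    then have "j \<le> alpha_ns S h" "alpha_ns S h + 1 = j + mu h" using \<open>mu h \<noteq> 0\<close> by (auto simp: j_def)
    then have "j * h \<in> apery S" "x = j * h + mu h * h"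
      using mult_mem_apery_iff[OF hS] by (simp_all add: x_def add_mult_distrib)
    \<comment> \<open>cancelling the \<open>mu h\<close> copies of \<open>h\<close> leaves \<open>j * h \<in> Ap(S)\<close> exceeding \<open>m\<close> within \<open>S\<close>\<close>
    moreover have "x = mu h * h + (gen_sum S (mu(h := 0)) + k * m) + m"
      using x gen_sum_split[OF h, of mu] by simp
    ultimately have "j * h - m = gen_sum S (mu(h := 0)) + k * m" "m \<le> j * h" by linarith+
    moreover have "gen_sum S (mu(h := 0)) + k * m \<in> S"
      using add_mem[OF gen_sum_mem mult_mem[OF multiplicity_mem]] .
    ultimately show False using \<open>j * h \<in> apery S\<close> by (simp add: apery_iff)
  qed
  then show ?thesis using mu(1) x unfolding x_def by (intro exI[of _ mu] exI[of _ "k + 1"]) auto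
qed

text \<open>A source is a generator \<open>g\<close> occurring in the carry \<open>mu h\<close> of no other generator \<open>h\<close>.
  If there were none, every generator would occur on the right of the summed carry equations,
  exhibiting \<open>gen_sum S (alpha_ns S) \<in> Ap(S)\<close> as an element of \<open>S\<close> plus a positive multiple
  of \<open>m\<close>.\<close>
lemma exists_source:
  assumes carry: "\<And>h. h \<in> other_gens S \<Longrightarrow>
    1 \<le> c h \<and> (alpha_ns S h + 1) * h = gen_sum S (mu h) + c h * m"
  shows "\<exists>g\<in>other_gens S. \<forall>h\<in>other_gens S. h \<noteq> g \<longrightarrow> mu h g = 0"
proof (rule ccontr)
  let ?G = "other_gens S"
  assume "\<not> ?thesis"
  then have used: "\<forall>g\<in>?G. \<exists>h\<in>?G. mu h g \<noteq> 0" by blast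
  define K where "K g = (\<Sum>h\<in>?G. mu h g)" for g
  define C where "C = (\<Sum>h\<in>?G. c h)"
  have "(K g - 1) * g + g = K g * g" if g: "g \<in> ?G" for g
  proof -
    obtain h where "h \<in> ?G" "mu h g \<noteq> 0" using used g by blast
    then have "mu h g \<le> K g" unfolding K_def by (intro member_le_sum finite_other_gens) auto
    then show ?thesis using \<open>mu h g \<noteq> 0\<close> by (cases "K g") simp_all
  qed
  then have "(\<Sum>g\<in>?G. K g * g) = (\<Sum>g\<in>?G. (K g - 1) * g) + (\<Sum>g\<in>?G. g)"
    by (simp add: sum.distrib[symmetric])
  with sum_succ_alpha_mult_eq[of mu c] carry
  have eq: "gen_sum S (alpha_ns S) = (\<Sum>g\<in>?G. (K g - 1) * g) + C * m"
    by (simp add: K_def C_def)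
  obtain h0 where "h0 \<in> ?G" using other_gens_nonempty by blast
  then have "c h0 \<le> C" unfolding C_def by (intro member_le_sum finite_other_gens) auto
  then have "1 \<le> C" using carry[OF \<open>h0 \<in> ?G\<close>] by linarith
  then have "C * m = (C - 1) * m + m" by (cases C) simp_all
  then have "gen_sum S (alpha_ns S) - m = (\<Sum>g\<in>?G. (K g - 1) * g) + (C - 1) * m"
    "m \<le> gen_sum S (alpha_ns S)"
    using eq by linarith+
  moreover have "(\<Sum>g\<in>?G. (K g - 1) * g) \<in> S"
    by (rule sum_mem) (auto intro: mult_mem other_gensD(1))
  then have "(\<Sum>g\<in>?G. (K g - 1) * g) + (C - 1) * m \<in> S"
    using add_mem mult_mem[OF multiplicity_mem] by blast
  moreover have "gen_sum S (alpha_ns S) \<in> apery S"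
    by (rule gen_sum_mem_apery) (simp add: alpha_box_def)
  ultimately show False by (simp add: apery_iff)
qed

end

locale alpha_rect_source = alpha_rect +
  fixes mu :: "nat \<Rightarrow> nat \<Rightarrow> nat" and c :: "nat \<Rightarrow> nat" and g :: nat
  assumes carry: "\<And>h. h \<in> other_gens S \<Longrightarrow> mu h \<in> alpha_box S \<and> mu h h = 0 \<and> 1 \<le> c h \<and>
      (alpha_ns S h + 1) * h = gen_sum S (mu h) + c h * m"
    and source_mem: "g \<in> other_gens S"
    and source: "\<And>h. h \<in> other_gens S \<Longrightarrow> h \<noteq> g \<Longrightarrow> mu h g = 0"
begin

definition d :: nat where "d = alpha_ns S g + 1"

lemma d_pos: "0 < d"
  by (simp add: d_def)

lemma source_mem_S: "g \<in> S" and multiplicity_less_source: "m < g" and two_le_d: "2 \<le> d"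
proof -
  show "g \<in> S" "m < g" using other_gensD[OF source_mem] by auto
  then have "1 * g \<in> apery S \<longleftrightarrow> 1 \<le> alpha_ns S g" by (intro mult_mem_apery_iff) auto
  then show "2 \<le> d" using other_gensD(3)[OF source_mem] by (simp add: d_def)
qed

lemma gen_sum_reduce:
  "n g = 0 \<Longrightarrow> \<exists>lam\<in>alpha_box S. lam g = 0 \<and> (\<exists>k. gen_sum S n = gen_sum S lam + k * m)"
proof (induction "gen_sum S n" arbitrary: n rule: less_induct)
  case less
  show ?case
  proof (cases "n \<in> alpha_box S")
    case True
    then show ?thesis using less.prems by (intro bexI[of _ n] conjI exI[of _ 0]) simp_all
  next
    case False
    then obtain h where h: "h \<in> other_gens S" "alpha_ns S h < n h"
      by (auto simp: alpha_box_def not_le)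
    then have "h \<noteq> g" using less.prems by auto
    \<comment> \<open>trade \<open>alpha_ns S h + 1\<close> copies of \<open>h\<close> for their carry \<open>mu h\<close> plus \<open>c h\<close> copies of \<open>m\<close>\<close>
    define a where "a = n h - (alpha_ns S h + 1)"
    define n' where "n' = (\<lambda>y. (n(h := a)) y + mu h y)"
    have "gen_sum S n = (a + (alpha_ns S h + 1)) * h + gen_sum S (n(h := 0))"
      using gen_sum_split[OF h(1), of n] h(2) by (simp add: a_def)
    moreover have "gen_sum S (n(h := a)) = a * h + gen_sum S (n(h := 0))"
      using gen_sum_split[OF h(1), of "n(h := a)"] by simp
    ultimately have "gen_sum S n = gen_sum S n' + c h * m"
      using carry[OF h(1)] gen_sum_add[of S "n(h := a)" "mu h"]
      by (simp add: n'_def add_mult_distrib)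
    moreover have "n' g = 0" using less.prems source[OF h(1) \<open>h \<noteq> g\<close>] \<open>h \<noteq> g\<close>
      by (simp add: n'_def)
    moreover have "0 < c h * m" using carry[OF h(1)] multiplicity_pos by simp
    ultimately obtain lam k where "lam \<in> alpha_box S" "lam g = 0" "gen_sum S n' = gen_sum S lam + k * m"
      using less.hyps[of n'] by auto
    then show ?thesis using \<open>gen_sum S n = gen_sum S n' + c h * m\<close>
      by (intro bexI[of _ lam] conjI exI[of _ "k + c h"]) (simp_all add: add_mult_distrib)
  qed
qed

lemma not_cong_mult_source_gen_sum:
  assumes j: "1 \<le> j" "j \<le> alpha_ns S g" and n: "n g = 0"
  shows "\<not> [j * g = gen_sum S n] (mod m)"
proof
  assume cong: "[j * g = gen_sum S n] (mod m)"
  define A where "A = gen_sum S ` {lam \<in> alpha_box S. lam g = 0}"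
  have "A \<subseteq> apery S" using gen_sum_mem_apery by (auto simp: A_def)
  then have fin: "finite A" using finite_apery finite_subset by blast
  have "gen_sum S (\<lambda>_. 0) \<in> A" unfolding A_def by (rule imageI) (simp add: alpha_box_def)
  then have "Max A \<in> A" using Max_in[OF fin] by blast
  then obtain ls where ls: "ls \<in> alpha_box S" "ls g = 0" "gen_sum S ls = Max A"
    by (auto simp: A_def)
  \<comment> \<open>raising the \<open>g\<close>-coefficient of the maximal element of \<open>A\<close> to \<open>j\<close> stays in \<open>Ap(S)\<close> \<dots>\<close>
  have box: "ls(g := j) \<in> alpha_box S" using ls(1) j(2) by (simp add: alpha_box_def)
  have "gen_sum S (ls(g := j)) = j * g + gen_sum S ls"
    using gen_sum_split[OF source_mem, of "ls(g := j)"] ls(2) by (simp add: fun_upd_idem)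
  with gen_sum_mem_apery[OF box] have top: "j * g + gen_sum S ls \<in> apery S" by simp
  \<comment> \<open>\<dots> but is congruent to an element of \<open>A\<close>\<close>
  obtain l k where l: "l \<in> alpha_box S" "l g = 0" "gen_sum S (\<lambda>y. n y + ls y) = gen_sum S l + k * m"
    using gen_sum_reduce[of "\<lambda>y. n y + ls y"] n ls(2) by auto
  have "[j * g + gen_sum S ls = gen_sum S n + gen_sum S ls] (mod m)"
    using cong by (rule cong_add) (rule cong_refl)
  also have "gen_sum S n + gen_sum S ls = gen_sum S l + k * m"
    using l(3) by (simp add: gen_sum_add)
  also have "[gen_sum S l + k * m = gen_sum S l] (mod m)" by (simp add: cong_def)
  finally have "j * g + gen_sum S ls = gen_sum S l"
    by (rule apery_eq_if_cong[OF top gen_sum_mem_apery[OF l(1)]])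
  moreover have "gen_sum S l \<le> Max A" using fin l(1,2) by (auto simp: A_def intro: Max_ge)
  moreover have "0 < j * g" using j(1) multiplicity_less_source by simp
  ultimately show False using ls(3) by linarith
qed

text \<open>\<open>in_H x\<close>: the residue of \<open>x\<close> modulo \<open>m\<close> lies in the subgroup generated by the minimal
  generators other than \<open>g\<close>.\<close>
definition in_H :: "nat \<Rightarrow> bool" where
  "in_H x \<longleftrightarrow> (\<exists>n. n g = 0 \<and> [x = gen_sum S n] (mod m))"

lemma in_H_cong: "in_H x \<Longrightarrow> [x = y] (mod m) \<Longrightarrow> in_H y"
  unfolding in_H_def using cong_trans[OF cong_sym] by blast

lemma in_H_gen_sum: "n g = 0 \<Longrightarrow> in_H (gen_sum S n)"
  unfolding in_H_def using cong_refl by blast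

lemma in_H_add: "in_H x \<Longrightarrow> in_H y \<Longrightarrow> in_H (x + y)"
proof -
  assume "in_H x" "in_H y"
  then obtain n1 n2 where n: "n1 g = 0" "[x = gen_sum S n1] (mod m)"
    "n2 g = 0" "[y = gen_sum S n2] (mod m)"
    unfolding in_H_def by blast
  then have "[x + y = gen_sum S (\<lambda>z. n1 z + n2 z)] (mod m)"
    by (simp add: gen_sum_add cong_add)
  then show "in_H (x + y)" unfolding in_H_def using n(1,3) by (intro exI[of _ "\<lambda>z. n1 z + n2 z"]) simp
qed

lemma in_H_mult: "in_H x \<Longrightarrow> in_H (k * x)"
proof (induction k)
  case 0
  then show ?case using in_H_gen_sum[of "\<lambda>_. 0"] by (simp add: gen_sum_def)
next
  case (Suc k)
  then show ?case using in_H_add by simp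
qed

lemma in_H_multiplicity: "in_H m"
  using in_H_cong[OF in_H_gen_sum[of "\<lambda>_. 0"], of m] by (simp add: gen_sum_def cong_def)

lemma in_H_d_mult_source: "in_H (d * g)"
  using carry[OF source_mem] in_H_cong[OF in_H_gen_sum[of "mu g"], of "d * g"]
  by (simp add: cong_def d_def)

lemma in_H_diff: "in_H (x + y) \<Longrightarrow> in_H y \<Longrightarrow> in_H x"
proof -
  assume "in_H (x + y)" "in_H y"
  then have "in_H ((x + y) + (m - 1) * y)" using in_H_add in_H_mult by simp
  moreover have eq: "(x + y) + (m - 1) * y = x + y * m"
    using multiplicity_pos by (cases m) (simp_all add: algebra_simps)
  have "[x + y * m = x] (mod m)" by (simp add: cong_def)
  then have "[(x + y) + (m - 1) * y = x] (mod m)" by (simp only: eq)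
  ultimately show "in_H x" by (rule in_H_cong)
qed

lemma in_H_mult_source_iff: "in_H (j * g) \<longleftrightarrow> d dvd j"
proof
  assume H: "in_H (j * g)"
  have "j * g = (j mod d + j div d * d) * g" by (simp only: mod_div_mult_eq)
  also have "\<dots> = (j mod d) * g + (j div d) * (d * g)" by (simp only: add_mult_distrib mult.assoc)
  finally have "in_H ((j mod d) * g)"
    using in_H_diff[of "(j mod d) * g"] H in_H_mult[OF in_H_d_mult_source] by simp
  then obtain n where n: "n g = 0" "[(j mod d) * g = gen_sum S n] (mod m)"
    unfolding in_H_def by blast
  have "j mod d \<le> alpha_ns S g" using mod_less_divisor[of d j] by (simp add: d_def)
  then have "\<not> 1 \<le> j mod d" using not_cong_mult_source_gen_sum[of "j mod d" n] n by blast
  then show "d dvd j" by (simp add: dvd_eq_mod_eq_0)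
next
  assume "d dvd j"
  then obtain q where "j = d * q" by (rule dvdE)
  then have "j * g = q * (d * g)" by (simp add: algebra_simps)
  then show "in_H (j * g)" using in_H_mult[OF in_H_d_mult_source, of q] by (simp only:)
qed

lemma exists_cong_one: "\<exists>X j0. in_H X \<and> [1 = X + j0 * g] (mod m)"
proof -
  obtain N where N: "\<forall>n\<ge>N. n \<in> S" using eventually_mem by blast
  have "N \<le> N * m" using multiplicity_pos by simp
  then have "N \<le> 1 + N * m" by linarith
  then have "1 + N * m \<in> S" using N by blast
  then obtain lam k where lam: "1 + N * m = gen_sum S lam + k * m" by (rule mem_decomp)
  have "[1 = 1 + N * m] (mod m)" by (simp only: cong_def mod_mult_self1)
  also have "1 + N * m = (gen_sum S (lam(g := 0)) + lam g * g) + k * m"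
    using lam gen_sum_split[OF source_mem, of lam] by simp
  also have "[\<dots> = gen_sum S (lam(g := 0)) + lam g * g] (mod m)" by (simp add: cong_def)
  finally show ?thesis using in_H_gen_sum[of "lam(g := 0)"] by auto
qed

text \<open>Writing \<open>1 \<equiv> X + j0 * g\<close> with \<open>X\<close> in \<open>H\<close>, every residue splits as \<open>y * X + (y * j0) * g\<close>.\<close>
lemma in_H_iff_dvd:
  assumes X: "in_H X" "[1 = X + j0 * g] (mod m)"
  shows "in_H y \<longleftrightarrow> d dvd y * j0"
proof -
  have split: "[y = y * X + (y * j0) * g] (mod m)"
    using cong_scalar_left[OF X(2), of y] by (simp add: algebra_simps)
  show ?thesis
  proof
    assume "in_H y"
    then have "in_H ((y * j0) * g + y * X)"
      using in_H_cong[OF _ split] by (simp add: add.commute)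
    then have "in_H ((y * j0) * g)" using in_H_diff in_H_mult[OF X(1)] by blast
    then show "d dvd y * j0" by (simp add: in_H_mult_source_iff)
  next
    assume "d dvd y * j0"
    then have "in_H (y * X + (y * j0) * g)"
      using in_H_add[OF in_H_mult[OF X(1)]] in_H_mult_source_iff by blast
    then show "in_H y" using in_H_cong[OF _ cong_sym[OF split]] by blast
  qed
qed

lemma coprime_d_if_cong_one:
  assumes "in_H X" "[1 = X + j0 * g] (mod m)"
  shows "coprime d j0"
proof -
  let ?G = "gcd d j0"
  obtain a where a: "d = ?G * a" using gcd_dvd1 by (rule dvdE)
  have "?G * a dvd j0 * a" by (rule mult_dvd_mono[OF gcd_dvd2 dvd_refl])
  then have "d dvd j0 * a" unfolding a[symmetric] .
  then have "d dvd (j0 * a) * g" by (rule dvd_mult2)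
  then have "d dvd (a * g) * j0" by (simp only: ac_simps)
  then have "in_H (a * g)" using in_H_iff_dvd[OF assms] by blast
  then have "d dvd a" using in_H_mult_source_iff by blast
  moreover have "0 < a" using a d_pos by (cases a) simp_all
  ultimately have "?G * a \<le> 1 * a" using a by (simp add: dvd_imp_le)
  then have "?G \<le> 1" using \<open>0 < a\<close> by (simp only: mult_le_cancel2)
  moreover have "?G \<noteq> 0" using d_pos by simp
  ultimately have "?G = 1" by linarith
  then show ?thesis by (simp add: coprime_iff_gcd_eq_1)
qed

lemma d_dvd_if_in_H: "in_H x \<Longrightarrow> d dvd x"
proof -
  assume "in_H x"
  obtain X j0 where X: "in_H X" "[1 = X + j0 * g] (mod m)" using exists_cong_one by blast
  then have "d dvd x * j0" using in_H_iff_dvd \<open>in_H x\<close> by blast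
  then show "d dvd x" using coprime_d_if_cong_one[OF X] coprime_dvd_mult_left_iff by blast
qed

lemma coprime_source_d: "coprime g d"
proof -
  obtain X j0 where X: "in_H X" "[1 = X + j0 * g] (mod m)" using exists_cong_one by blast
  have "d dvd m" "d dvd X" using d_dvd_if_in_H in_H_multiplicity X(1) by blast+
  then have "[X + j0 * g = 1] (mod d)" using cong_sym[OF cong_dvd_modulus_nat[OF X(2)]] by blast
  moreover have "[0 + j0 * g = X + j0 * g] (mod d)"
    using \<open>d dvd X\<close> cong_sym[of X 0 d] by (intro cong_add cong_refl) (simp add: cong_0_iff)
  ultimately have "[g * j0 = Suc 0] (mod d)" using cong_trans by (simp add: mult.commute)
  then show ?thesis using coprime_iff_invertible_nat by blast
qed

abbreviation T :: "nat set" where "T \<equiv> quotient_ns S d"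

lemma d_dvd_multiplicity: "d dvd m"
  using d_dvd_if_in_H[OF in_H_multiplicity] .

lemma multiplicity_T: "multiplicity_ns T = m div d"
  using multiplicity_quotient[OF d_pos d_dvd_multiplicity] .

lemma source_mem_T: "g \<in> T"
  using mult_mem[OF source_mem_S, of d] by (simp add: quotient_ns_def)

lemma source_not_apery_T: "g \<notin> apery T"
proof -
  have "0 < g" using multiplicity_less_source by simp
  then have "d * g \<notin> apery S" using mult_mem_apery_iff[OF source_mem_S \<open>0 < g\<close>, of d] by (simp add: d_def)
  then have "m \<le> d * g" "d * g - m \<in> S"
    using mult_mem[OF source_mem_S, of d] unfolding apery_iff by blast+
  moreover have "d * (m div d) = m" using d_dvd_multiplicity by simp
  ultimately have "g - m div d \<in> T" by (simp add: quotient_ns_def diff_mult_distrib2)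
  moreover have "m div d \<le> g" using div_le_dividend[of m d] multiplicity_less_source by linarith
  ultimately show ?thesis by (simp add: apery_def multiplicity_T)
qed

lemma mult_multiplicity_T_less: "d * multiplicity_ns T < g"
  using multiplicity_less_source
  by (simp only: multiplicity_T dvd_mult_div_cancel[OF d_dvd_multiplicity])

lemma gluing_T: "gluing T g d"
  unfolding gluing_iff
  using numerical_semigroup_quotient coprime_source_d source_mem_T two_le_d source_not_apery_T
    mult_multiplicity_T_less by simp

lemma S_eq_gluing_T: "S = gluing_N d T g"
proof (intro equalityI subsetI)
  fix s assume "s \<in> S"
  then obtain lam k where lam: "s = gen_sum S lam + k * m" by (rule mem_decomp)
  define r where "r = gen_sum S (lam(g := 0)) + k * m"
  have "d dvd r" unfolding r_def
    using d_dvd_if_in_H[OF in_H_gen_sum] d_dvd_multiplicity by simp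
  then obtain t where "r = d * t" by (rule dvdE)
  moreover have "r \<in> S" unfolding r_def using add_mem gen_sum_mem mult_mem multiplicity_mem by simp
  moreover have "s = r + g * lam g" using lam gen_sum_split[OF source_mem, of lam] by (simp add: r_def)
  ultimately show "s \<in> gluing_N d T g" by (auto simp: gluing_N_def quotient_ns_def)
next
  fix s assume "s \<in> gluing_N d T g"
  then obtain t k where "d * t \<in> S" "s = d * t + g * k" by (auto simp: gluing_N_def quotient_ns_def)
  then show "s \<in> S" using add_mem mult_mem[OF source_mem_S, of k] by (simp add: mult.commute)
qed

lemma alpha_rectangular_T: "alpha_rectangular T"
  using gluing.alpha_rectangular_gluing_iff[OF gluing_T] S_eq_gluing_T alpha_rectangular by simp

end

lemma (in alpha_rect) exists_gluing:
  "\<exists>T d1 d2. gluing T d1 d2 \<and> alpha_rectangular T \<and> S = gluing_N d2 T d1"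
proof -
  have "\<forall>h\<in>other_gens S. \<exists>mu c. mu \<in> alpha_box S \<and> mu h = 0 \<and> 1 \<le> c \<and>
      (alpha_ns S h + 1) * h = gen_sum S mu + c * m"
    using succ_alpha_mult_decomp by blast
  then obtain mu c where carry: "\<And>h. h \<in> other_gens S \<Longrightarrow> mu h \<in> alpha_box S \<and> mu h h = 0 \<and>
      1 \<le> c h \<and> (alpha_ns S h + 1) * h = gen_sum S (mu h) + c h * m"
    by metis
  then obtain g where g: "g \<in> other_gens S" "\<forall>h\<in>other_gens S. h \<noteq> g \<longrightarrow> mu h g = 0"
    using exists_source[of c mu] by blast
  interpret alpha_rect_source S mu c g
    by (intro alpha_rect_source.intro alpha_rect_source_axioms.intro alpha_rect.intro
        num_semigroup_axioms alpha_rect_axioms) (use carry g in auto)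
  show ?thesis using gluing_T alpha_rectangular_T S_eq_gluing_T by blast
qed

theorem mainTheorem10:
  shows "(\<forall>T d1 d2. numerical_semigroup T \<and> alpha_rectangular T \<and>
            0 < d1 \<and> 0 < d2 \<and> coprime d1 d2 \<and> d1 \<in> T \<and> d1 \<notin> min_gens T \<and>
            2 \<le> d2 \<and> d1 \<notin> apery T \<and> d1 > d2 * multiplicity_ns T
          \<longrightarrow> numerical_semigroup (gluing_N d2 T d1) \<and> alpha_rectangular (gluing_N d2 T d1))
       \<and> (\<forall>S. numerical_semigroup S \<and> S \<noteq> UNIV \<and> alpha_rectangular S \<longrightarrow>
            (\<exists>T d1 d2. numerical_semigroup T \<and> alpha_rectangular T \<and>
              0 < d1 \<and> 0 < d2 \<and> coprime d1 d2 \<and> d1 \<in> T \<and> d1 \<notin> min_gens T \<and>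
              2 \<le> d2 \<and> d1 \<notin> apery T \<and> d1 > d2 * multiplicity_ns T \<and>
              S = gluing_N d2 T d1))"
proof (rule conjI; intro allI impI)
  fix T d1 d2
  assume hyps: "numerical_semigroup T \<and> alpha_rectangular T \<and>
    0 < d1 \<and> 0 < d2 \<and> coprime d1 d2 \<and> d1 \<in> T \<and> d1 \<notin> min_gens T \<and>
    2 \<le> d2 \<and> d1 \<notin> apery T \<and> d1 > d2 * multiplicity_ns T"
  then have gl: "gluing T d1 d2" by (simp add: gluing_iff)
  show "numerical_semigroup (gluing_N d2 T d1) \<and> alpha_rectangular (gluing_N d2 T d1)"
    using gluing.numerical_semigroup_gluing[OF gl] gluing.alpha_rectangular_gluing_iff[OF gl] hyps
    by blast
next
  fix S assume "numerical_semigroup S \<and> S \<noteq> UNIV \<and> alpha_rectangular S"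
  then have "alpha_rect S" by (simp add: alpha_rect_def alpha_rect_axioms_def num_semigroup_def)
  then obtain T d1 d2 where gl: "gluing T d1 d2" and "alpha_rectangular T" "S = gluing_N d2 T d1"
    using alpha_rect.exists_gluing by blast
  then show "\<exists>T d1 d2. numerical_semigroup T \<and> alpha_rectangular T \<and>
    0 < d1 \<and> 0 < d2 \<and> coprime d1 d2 \<and> d1 \<in> T \<and> d1 \<notin> min_gens T \<and>
    2 \<le> d2 \<and> d1 \<notin> apery T \<and> d1 > d2 * multiplicity_ns T \<and> S = gluing_N d2 T d1"
    using gl gluing_iff[of T d1 d2] gluing.d1_not_min_gens[OF gl] gluing.d1_pos[OF gl]
      gluing.d2_pos[OF gl] by blast
qed

end
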